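(* Let $n\ge5$, $1\le m\le n-1$ with $2m\neq n$, $a>0$, and let $\Gamma^{m,n}$ be the closed discrete curve $p_k=a(\cos(2\pi mk/n),\sin(2\pi mk/n))$, $k=0,\dots,n-1$, with $l_0:=|p_{k+1}-p_k|=2a|\sin(m\pi/n)|$. Let $(A,B)\in\mathbb{R}^2$ and $\psi_k=A\cos(2\pi k/n)+B\sin(2\pi k/n)$. Then $\sum_k\psi_k=0$, and for every $C^2$ family $p(t)$ of closed discrete curves with $p(0)=\Gamma^{m,n}$, $\mathrm{Vol}(p(t))$ constant and $p_k'(0)=\psi_kN_k$, \[ \frac{d^2}{dt^2}\Big|_{t=0}L(p(t))=\frac{4}{l_0}\Big[\sin^2\frac{\pi}{n}-\cos\frac{2\pi}{n}\tan^2\frac{m\pi}{n}\Big]\sum_k\psi_k^2 . \] This value is $\ge0$ if $m\in\{1,n-1\}$, and is $<0$ if $2\le m\le n-2$ and $(A,B)\ne(0,0)$.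
   Context: A closed discrete curve is an $n$-tuple $(p_0,\dots,p_{n-1})$ of points of $\mathbb{R}^2$, indices modulo $n$, with $l_k:=|p_{k+1}-p_k|\ne0$ for all $k$. $R_\varphi$ denotes rotation of $\mathbb{R}^2$ by $\varphi$. Fix $R\in\{R_{\pi/2},R_{-\pi/2}\}$ and set $\sigma=+1$ if $R=R_{\pi/2}$, $\sigma=-1$ if $R=R_{-\pi/2}$. Edge normal $\nu_k:=R((p_{k+1}-p_k)/l_k)$. The signed angle $\theta_k\in(-\pi,\pi]$ at vertex $p_k$ is defined by $\nu_k=R_{\sigma\theta_k}\nu_{k-1}$. When $\theta_k\ne\pi$, the vertex normal is $N_k:=\dfrac{\nu_k+\nu_{k-1}}{1+\cos\theta_k}$. Length $L=\sum_k l_k$, area $\mathrm{Vol}=\frac12\sum_k\langle p_k,\nu_k\rangle l_k$. *)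

theory Defs
  imports "HOL-Analysis.Analysis"
begin

text \<open>Points of the plane R^2 are represented as complex numbers (real and
imaginary part are the two coordinates; the inner product on complex is the
Euclidean one). A discrete curve with n vertices is a function
p :: nat => complex, of which only p 0, ..., p (n-1) matter; indices are
taken modulo n. The parameter sigma is +1 for R = R_{pi/2} and -1 for
R = R_{-pi/2}.\<close>

definition rot :: "real \<Rightarrow> complex \<Rightarrow> complex" where
  "rot \<phi> z = cis \<phi> * z"

definition closed_discrete_curve :: "nat \<Rightarrow> (nat \<Rightarrow> complex) \<Rightarrow> bool" where
  "closed_discrete_curve n p \<longleftrightarrow> n > 0 \<and> (\<forall>k<n. p (Suc k mod n) \<noteq> p k)"

definition edge_len :: "nat \<Rightarrow> (nat \<Rightarrow> complex) \<Rightarrow> nat \<Rightarrow> real" where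
  "edge_len n p k = norm (p (Suc k mod n) - p (k mod n))"

definition edge_normal :: "real \<Rightarrow> nat \<Rightarrow> (nat \<Rightarrow> complex) \<Rightarrow> nat \<Rightarrow> complex" where
  "edge_normal \<sigma> n p k =
     rot (\<sigma> * pi / 2) ((p (Suc k mod n) - p (k mod n)) / of_real (edge_len n p k))"

definition prev_idx :: "nat \<Rightarrow> nat \<Rightarrow> nat" where
  "prev_idx n k = (k + n - 1) mod n"

definition signed_angle :: "real \<Rightarrow> nat \<Rightarrow> (nat \<Rightarrow> complex) \<Rightarrow> nat \<Rightarrow> real" where
  "signed_angle \<sigma> n p k =
     (THE \<theta>. -pi < \<theta> \<and> \<theta> \<le> pi \<and>
        edge_normal \<sigma> n p k = rot (\<sigma> * \<theta>) (edge_normal \<sigma> n p (prev_idx n k)))"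

definition vertex_normal :: "real \<Rightarrow> nat \<Rightarrow> (nat \<Rightarrow> complex) \<Rightarrow> nat \<Rightarrow> complex" where
  "vertex_normal \<sigma> n p k =
     (1 / (1 + cos (signed_angle \<sigma> n p k))) *\<^sub>R
       (edge_normal \<sigma> n p k + edge_normal \<sigma> n p (prev_idx n k))"

definition curve_length :: "nat \<Rightarrow> (nat \<Rightarrow> complex) \<Rightarrow> real" where
  "curve_length n p = (\<Sum>k<n. edge_len n p k)"

definition curve_vol :: "real \<Rightarrow> nat \<Rightarrow> (nat \<Rightarrow> complex) \<Rightarrow> real" where
  "curve_vol \<sigma> n p = (1/2) * (\<Sum>k<n. (p k \<bullet> edge_normal \<sigma> n p k) * edge_len n p k)"

definition Gamma :: "real \<Rightarrow> nat \<Rightarrow> nat \<Rightarrow> nat \<Rightarrow> complex" where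
  "Gamma a m n k = complex_of_real a * cis (2 * pi * real m * real k / real n)"

end

(* Write the vertices of Gamma^{m,n} as p_k = a u_k with unit vectors u_k = cis (2 pi m k / n),
   so that u_{k+1} = w u_k for the turn w = cis (2 beta), beta = m pi / n.  All edges have length
   l0 = 2 a sin beta, and the vertex normals are N_k = -sigma u_k / cos beta.  For the edge
   vectors E_k of p(t), the second derivative of the length is
   sum_k (|E_k'|^2 + E_k . E_k'') / l0 - (E_k . E_k')^2 / l0^3.  The unknown accelerations enter
   only through sum_k E_k . E_k'', which by summation by parts is a multiple of
   sum_k u_k . p_k''; the second derivative of the constant area contains the same quantity and
   thereby expresses it through sum_k psi_k psi_{k+1}.  Since psi is a first harmonic,
   sum_k psi_k psi_{k+1} = cos (2 pi / n) sum_k psi_k^2, which gives the stated value.  Its sign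
   is that of sin^2 (pi/n) - cos (2 pi/n) tan^2 beta; for 2 <= m <= n - 2 one has
   |cos beta| <= cos (2 pi / n), hence tan^2 beta >= tan^2 (2 pi / n), which makes it negative. *)

theory Submission
  imports Defs
begin

section \<open>Second derivatives of norms and of conserved quantities\<close>

lemma has_real_derivative_inner:
  fixes f g :: "real \<Rightarrow> 'a::real_inner"
  assumes "(f has_vector_derivative f') (at t)" "(g has_vector_derivative g') (at t)"
  shows "((\<lambda>s. f s \<bullet> g s) has_real_derivative f' \<bullet> g t + f t \<bullet> g') (at t)"
proof -
  have "((\<lambda>s. f s \<bullet> g s) has_derivative (\<lambda>h. f t \<bullet> (h *\<^sub>R g') + (h *\<^sub>R f') \<bullet> g t)) (at t)"
    using assms unfolding has_vector_derivative_def by (intro has_derivative_inner)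
  then show ?thesis
    unfolding has_field_derivative_def
    by (rule has_derivative_eq_rhs) (auto simp: algebra_simps fun_eq_iff)
qed

lemma has_real_derivative_norm:
  fixes f :: "real \<Rightarrow> 'a::real_inner"
  assumes "(f has_vector_derivative f') (at t)" "f t \<noteq> 0"
  shows "((\<lambda>s. norm (f s)) has_real_derivative f t \<bullet> f' / norm (f t)) (at t)"
proof -
  have "((\<lambda>s. f s \<bullet> f s) has_real_derivative 2 * (f t \<bullet> f')) (at t)"
    using has_real_derivative_inner[OF assms(1) assms(1)] by (simp add: inner_commute)
  from DERIV_chain2[OF DERIV_real_sqrt this] have "((\<lambda>s. sqrt (f s \<bullet> f s)) has_real_derivative
      inverse (sqrt (f t \<bullet> f t)) / 2 * (2 * (f t \<bullet> f'))) (at t)"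
    using assms(2) by simp
  then show ?thesis
    by (simp add: norm_eq_sqrt_inner[symmetric] field_simps)
qed

(* The second derivative of t \<mapsto> norm (x + t v + t^2 r / 2) at t = 0. *)
definition norm_second_deriv :: "'a::real_inner \<Rightarrow> 'a \<Rightarrow> 'a \<Rightarrow> real" where
  "norm_second_deriv x v r = (v \<bullet> v + x \<bullet> r) / norm x - (x \<bullet> v)\<^sup>2 / norm x ^ 3"

lemma has_real_derivative_norm_deriv:
  fixes f f' :: "real \<Rightarrow> 'a::real_inner"
  assumes f: "(f has_vector_derivative f' t) (at t)" and f': "(f' has_vector_derivative f'') (at t)"
    and nz: "f t \<noteq> 0"
  shows "((\<lambda>s. f s \<bullet> f' s / norm (f s)) has_real_derivative
           norm_second_deriv (f t) (f' t) f'') (at t)"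
proof -
  have ne: "norm (f t) \<noteq> 0" using nz by simp
  have "((\<lambda>s. f s \<bullet> f' s / norm (f s)) has_real_derivative
      ((f' t \<bullet> f' t + f t \<bullet> f'') * norm (f t) - (f t \<bullet> f' t) * (f t \<bullet> f' t / norm (f t)))
        / (norm (f t) * norm (f t))) (at t)"
    using nz by (intro DERIV_divide has_real_derivative_inner has_real_derivative_norm f f') auto
  moreover have "((f' t \<bullet> f' t + f t \<bullet> f'') * norm (f t) - (f t \<bullet> f' t) * (f t \<bullet> f' t / norm (f t)))
      / (norm (f t) * norm (f t)) = norm_second_deriv (f t) (f' t) f''"
    using ne unfolding norm_second_deriv_def by (simp add: field_simps power2_eq_square power3_eq_cube)
  ultimately show ?thesis
    by simp
qed

lemma deriv_has_real_derivative:
  assumes "open S" "t \<in> S" "\<forall>s\<in>S. (f has_real_derivative f' s) (at s)"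
    and "(f' has_real_derivative D) (at t)"
  shows "(deriv f has_real_derivative D) (at t)"
  using assms(4,1,2) by (rule has_field_derivative_transform_within_open) (use assms(3) in \<open>metis DERIV_imp_deriv\<close>)

lemma sum_norm_second_derivative:
  fixes e e' :: "'i \<Rightarrow> real \<Rightarrow> 'a::real_inner"
  assumes S: "open S" "t \<in> S"
    and e: "\<forall>k\<in>K. \<forall>s\<in>S. (e k has_vector_derivative e' k s) (at s)"
    and e': "\<forall>k\<in>K. (e' k has_vector_derivative e'' k) (at t)"
    and nz: "\<forall>k\<in>K. \<forall>s\<in>S. e k s \<noteq> 0"
  shows "(deriv (\<lambda>s. \<Sum>k\<in>K. norm (e k s)) has_real_derivative
           (\<Sum>k\<in>K. norm_second_deriv (e k t) (e' k t) (e'' k))) (at t)"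
  using S
proof (rule deriv_has_real_derivative)
  show "\<forall>s\<in>S. ((\<lambda>s. \<Sum>k\<in>K. norm (e k s)) has_real_derivative
      (\<Sum>k\<in>K. e k s \<bullet> e' k s / norm (e k s))) (at s)"
    using e nz by (auto intro!: DERIV_sum has_real_derivative_norm)
  show "((\<lambda>s. \<Sum>k\<in>K. e k s \<bullet> e' k s / norm (e k s)) has_real_derivative
      (\<Sum>k\<in>K. norm_second_deriv (e k t) (e' k t) (e'' k))) (at t)"
    using e e' nz S(2) by (auto intro!: DERIV_sum has_real_derivative_norm_deriv)
qed

lemma conserved_sum_inner_second_derivative:
  fixes x y x' y' :: "'i \<Rightarrow> real \<Rightarrow> 'a::real_inner"
  assumes S: "open S" "t \<in> S"
    and x: "\<forall>k\<in>K. \<forall>s\<in>S. (x k has_vector_derivative x' k s) (at s)"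
    and y: "\<forall>k\<in>K. \<forall>s\<in>S. (y k has_vector_derivative y' k s) (at s)"
    and x': "\<forall>k\<in>K. (x' k has_vector_derivative x'' k) (at t)"
    and y': "\<forall>k\<in>K. (y' k has_vector_derivative y'' k) (at t)"
    and const: "\<forall>s\<in>S. (\<Sum>k\<in>K. x k s \<bullet> y k s) = (\<Sum>k\<in>K. x k t \<bullet> y k t)"
  shows "(\<Sum>k\<in>K. x'' k \<bullet> y k t + 2 * (x' k t \<bullet> y' k t) + x k t \<bullet> y'' k) = 0"
proof -
  define W' where "W' s = (\<Sum>k\<in>K. x' k s \<bullet> y k s + x k s \<bullet> y' k s)" for s
  have W: "((\<lambda>s. \<Sum>k\<in>K. x k s \<bullet> y k s) has_real_derivative W' s) (at s)" if "s \<in> S" for s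
    unfolding W'_def
  proof (rule DERIV_sum)
    fix k assume "k \<in> K"
    then show "((\<lambda>s. x k s \<bullet> y k s) has_real_derivative x' k s \<bullet> y k s + x k s \<bullet> y' k s) (at s)"
      using x y that by (intro has_real_derivative_inner) auto
  qed
  have W'_zero: "W' s = 0" if "s \<in> S" for s
  proof (rule DERIV_unique[OF W[OF that]])
    show "((\<lambda>s. \<Sum>k\<in>K. x k s \<bullet> y k s) has_real_derivative 0) (at s)"
      by (rule has_field_derivative_transform_within_open[OF DERIV_const S(1) that]) (use const in auto)
  qed
  have "(W' has_real_derivative
      (\<Sum>k\<in>K. x'' k \<bullet> y k t + 2 * (x' k t \<bullet> y' k t) + x k t \<bullet> y'' k)) (at t)"
    unfolding W'_def
  proof (rule DERIV_sum)
    fix k assume k: "k \<in> K"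
    have "((\<lambda>s. x' k s \<bullet> y k s + x k s \<bullet> y' k s) has_real_derivative
        (x'' k \<bullet> y k t + x' k t \<bullet> y' k t) + (x' k t \<bullet> y' k t + x k t \<bullet> y'' k)) (at t)"
      using x y x' y' k S(2) by (intro DERIV_add has_real_derivative_inner) auto
    then show "((\<lambda>s. x' k s \<bullet> y k s + x k s \<bullet> y' k s) has_real_derivative
        x'' k \<bullet> y k t + 2 * (x' k t \<bullet> y' k t) + x k t \<bullet> y'' k) (at t)"
      by (simp add: algebra_simps)
  qed
  moreover have "(W' has_real_derivative 0) (at t)"
    by (rule has_field_derivative_transform_within_open[OF DERIV_const S]) (use W'_zero in auto)
  ultimately show ?thesis by (rule DERIV_unique)
qed

section \<open>Closed discrete curves\<close>

lemma curve_vol_eq_sum_inner: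
  assumes "closed_discrete_curve n p"
  shows "curve_vol \<sigma> n p = 1 / 2 * (\<Sum>k<n. p k \<bullet> (cis (\<sigma> * pi / 2) * (p (Suc k mod n) - p k)))"
  unfolding curve_vol_def
proof (rule arg_cong[where f = "\<lambda>x. 1 / 2 * x"], rule sum.cong[OF refl])
  fix k assume "k \<in> {..<n}"
  define d where "d = p (Suc k mod n) - p k"
  have "d \<noteq> 0" and len: "edge_len n p k = norm d"
    using assms \<open>k \<in> {..<n}\<close> by (auto simp: d_def edge_len_def closed_discrete_curve_def)
  have "edge_normal \<sigma> n p k = (1 / norm d) *\<^sub>R (cis (\<sigma> * pi / 2) * d)"
    using \<open>k \<in> {..<n}\<close> unfolding edge_normal_def rot_def len
    by (simp add: d_def[symmetric] scaleR_conv_of_real)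
  then show "p k \<bullet> edge_normal \<sigma> n p k * edge_len n p k
      = p k \<bullet> (cis (\<sigma> * pi / 2) * (p (Suc k mod n) - p k))"
    using \<open>d \<noteq> 0\<close> by (simp add: len d_def[symmetric])
qed

lemma edge_has_vector_derivative:
  fixes P :: "real \<Rightarrow> nat \<Rightarrow> 'a::real_normed_vector"
  assumes "0 < n" and "\<forall>k<n. \<forall>t\<in>S. ((\<lambda>s. P s k) has_vector_derivative P' k t) (at t)"
  shows "\<forall>k<n. \<forall>t\<in>S. ((\<lambda>s. P s (Suc k mod n) - P s k)
           has_vector_derivative P' (Suc k mod n) t - P' k t) (at t)"
  using assms by (auto intro!: has_vector_derivative_diff)

lemma curve_length_second_derivative:
  fixes n :: nat and \<epsilon> :: real and P :: "real \<Rightarrow> nat \<Rightarrow> complex" and P' P'' :: "nat \<Rightarrow> real \<Rightarrow> complex"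
  defines "x \<equiv> \<lambda>k. P 0 (k mod n)" and "v \<equiv> \<lambda>k. P' (k mod n) 0" and "r \<equiv> \<lambda>k. P'' (k mod n) 0"
  assumes \<epsilon>: "\<epsilon> > 0"
    and closed: "\<forall>t\<in>ball 0 \<epsilon>. closed_discrete_curve n (P t)"
    and P': "\<forall>k<n. \<forall>t\<in>ball 0 \<epsilon>. ((\<lambda>s. P s k) has_vector_derivative P' k t) (at t)"
    and P'': "\<forall>k<n. \<forall>t\<in>ball 0 \<epsilon>. (P' k has_vector_derivative P'' k t) (at t)"
  shows "(deriv (\<lambda>t. curve_length n (P t)) has_real_derivative
           (\<Sum>k<n. norm_second_deriv (x (Suc k) - x k) (v (Suc k) - v k) (r (Suc k) - r k))) (at 0)"
proof -
  have n: "0 < n"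
    using closed centre_in_ball[of 0 \<epsilon>] \<epsilon> unfolding closed_discrete_curve_def by blast
  have "curve_length n (P t) = (\<Sum>k<n. norm (P t (Suc k mod n) - P t k))" for t
    by (simp add: curve_length_def edge_len_def)
  moreover have "(deriv (\<lambda>t. \<Sum>k<n. norm (P t (Suc k mod n) - P t k)) has_real_derivative
      (\<Sum>k<n. norm_second_deriv (P 0 (Suc k mod n) - P 0 k) (P' (Suc k mod n) 0 - P' k 0)
         (P'' (Suc k mod n) 0 - P'' k 0))) (at 0)"
    using edge_has_vector_derivative[OF n P'] edge_has_vector_derivative[OF n P''] closed \<epsilon>
    by (intro sum_norm_second_derivative[of "ball 0 \<epsilon>"]) (auto simp: closed_discrete_curve_def)
  moreover have "(\<Sum>k<n. norm_second_deriv (P 0 (Suc k mod n) - P 0 k) (P' (Suc k mod n) 0 - P' k 0)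
         (P'' (Suc k mod n) 0 - P'' k 0))
      = (\<Sum>k<n. norm_second_deriv (x (Suc k) - x k) (v (Suc k) - v k) (r (Suc k) - r k))"
    by (intro sum.cong refl) (simp add: x_def v_def r_def)
  ultimately show ?thesis
    by simp
qed

lemma curve_vol_second_variation:
  fixes n :: nat and \<sigma> \<epsilon> :: real and P :: "real \<Rightarrow> nat \<Rightarrow> complex" and P' P'' :: "nat \<Rightarrow> real \<Rightarrow> complex"
  defines "x \<equiv> \<lambda>k. P 0 (k mod n)" and "v \<equiv> \<lambda>k. P' (k mod n) 0" and "r \<equiv> \<lambda>k. P'' (k mod n) 0"
    and "J \<equiv> cis (\<sigma> * pi / 2)"
  assumes \<epsilon>: "\<epsilon> > 0"
    and closed: "\<forall>t\<in>ball 0 \<epsilon>. closed_discrete_curve n (P t)"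
    and P': "\<forall>k<n. \<forall>t\<in>ball 0 \<epsilon>. ((\<lambda>s. P s k) has_vector_derivative P' k t) (at t)"
    and P'': "\<forall>k<n. \<forall>t\<in>ball 0 \<epsilon>. (P' k has_vector_derivative P'' k t) (at t)"
    and vol: "\<forall>t\<in>ball 0 \<epsilon>. curve_vol \<sigma> n (P t) = curve_vol \<sigma> n (P 0)"
  shows "(\<Sum>k<n. r k \<bullet> (J * (x (Suc k) - x k)) + 2 * (v k \<bullet> (J * (v (Suc k) - v k)))
           + x k \<bullet> (J * (r (Suc k) - r k))) = 0"
proof -
  have n: "0 < n"
    using closed centre_in_ball[of 0 \<epsilon>] \<epsilon> unfolding closed_discrete_curve_def by blast
  have "(\<Sum>k<n. P'' k 0 \<bullet> (J * (P 0 (Suc k mod n) - P 0 k))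
      + 2 * (P' k 0 \<bullet> (J * (P' (Suc k mod n) 0 - P' k 0)))
      + P 0 k \<bullet> (J * (P'' (Suc k mod n) 0 - P'' k 0))) = 0"
  proof (rule conserved_sum_inner_second_derivative[of "ball 0 \<epsilon>"])
    show "\<forall>s\<in>ball 0 \<epsilon>. (\<Sum>k<n. P s k \<bullet> (J * (P s (Suc k mod n) - P s k)))
        = (\<Sum>k<n. P 0 k \<bullet> (J * (P 0 (Suc k mod n) - P 0 k)))"
    proof
      fix s :: real assume "s \<in> ball 0 \<epsilon>"
      with vol have "curve_vol \<sigma> n (P s) = curve_vol \<sigma> n (P 0)"
        by blast
      moreover have "closed_discrete_curve n (P s)" "closed_discrete_curve n (P 0)"
        using closed \<open>s \<in> ball 0 \<epsilon>\<close> \<epsilon> by simp_all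
      ultimately show "(\<Sum>k<n. P s k \<bullet> (J * (P s (Suc k mod n) - P s k)))
          = (\<Sum>k<n. P 0 k \<bullet> (J * (P 0 (Suc k mod n) - P 0 k)))"
        by (simp add: curve_vol_eq_sum_inner J_def)
    qed
  qed (use \<epsilon> P' P'' edge_has_vector_derivative[OF n P'] edge_has_vector_derivative[OF n P'']
       in \<open>auto intro: has_vector_derivative_mult_right\<close>)
  moreover have "(\<Sum>k<n. P'' k 0 \<bullet> (J * (P 0 (Suc k mod n) - P 0 k))
      + 2 * (P' k 0 \<bullet> (J * (P' (Suc k mod n) 0 - P' k 0)))
      + P 0 k \<bullet> (J * (P'' (Suc k mod n) 0 - P'' k 0)))
      = (\<Sum>k<n. r k \<bullet> (J * (x (Suc k) - x k)) + 2 * (v k \<bullet> (J * (v (Suc k) - v k)))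
          + x k \<bullet> (J * (r (Suc k) - r k)))"
    by (intro sum.cong refl) (simp add: r_def x_def v_def)
  ultimately show ?thesis
    by simp
qed

lemma cis_sign_mult_eq_iff:
  assumes "\<sigma> = 1 \<or> \<sigma> = -1"
  shows "cis (\<sigma> * \<theta>) = cis \<phi> \<longleftrightarrow> cis \<theta> = cis (\<sigma> * \<phi>)"
  using assms by (auto simp: cis_cnj[symmetric] dest: arg_cong[where f = cnj])

lemma cos_Arg_cis: "cos (Arg (cis x)) = cos x"
  using cis_Arg[of "cis x"] by (metis cis.sel(1) cis_neq_zero sgn_cis)

lemma signed_angle_eq_Arg:
  assumes \<sigma>: "\<sigma> = 1 \<or> \<sigma> = -1"
    and turn: "edge_normal \<sigma> n p k = cis \<phi> * edge_normal \<sigma> n p (prev_idx n k)"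
    and nz: "edge_normal \<sigma> n p (prev_idx n k) \<noteq> 0"
  shows "signed_angle \<sigma> n p k = Arg (cis (\<sigma> * \<phi>))"
proof -
  have rot_iff: "edge_normal \<sigma> n p k = rot (\<sigma> * \<theta>) (edge_normal \<sigma> n p (prev_idx n k))
      \<longleftrightarrow> cis \<theta> = cis (\<sigma> * \<phi>)" for \<theta>
    using nz cis_sign_mult_eq_iff[OF \<sigma>, of \<theta> \<phi>] by (auto simp: turn rot_def)
  have "Arg (cis (\<sigma> * \<phi>)) = \<theta>" if "-pi < \<theta>" "\<theta> \<le> pi" "cis \<theta> = cis (\<sigma> * \<phi>)" for \<theta>
    by (rule Arg_unique'[of 1]) (use that in \<open>auto simp: rcis_def\<close>)
  moreover have "cis (Arg (cis (\<sigma> * \<phi>))) = cis (\<sigma> * \<phi>)"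
    by (simp add: cis_Arg sgn_cis)
  ultimately show ?thesis
    unfolding signed_angle_def rot_iff using Arg_bounded by (intro the_equality) auto
qed

lemma inner_mult_right_cnj: "(x::complex) \<bullet> (z * y) = (cnj z * x) \<bullet> y"
  by (simp add: inner_complex_def algebra_simps)

lemma inner_of_real_mult_left [simp]: "(complex_of_real r * x) \<bullet> y = r * (x \<bullet> y)"
  by (simp add: inner_complex_def algebra_simps)

lemma inner_of_real_mult_right [simp]: "x \<bullet> (complex_of_real r * y) = r * (x \<bullet> y)"
  by (simp add: inner_complex_def algebra_simps)

lemma inner_cis_combination_self:
  "(of_real y * cis \<alpha> - of_real x) \<bullet> (of_real y * cis \<alpha> - of_real x) = y\<^sup>2 - 2 * cos \<alpha> * x * y + x\<^sup>2"
  by (simp add: inner_complex_def power2_eq_square algebra_simps)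
    (simp only: distrib_left[symmetric] sin_cos_squared_add3 mult_1_right)

lemma inner_cis_minus_1_combination:
  "(cis \<alpha> - 1) \<bullet> (of_real y * cis \<alpha> - of_real x) = (1 - cos \<alpha>) * (x + y)"
  by (simp add: inner_complex_def power2_eq_square algebra_simps)
    (simp only: distrib_left[symmetric] sin_cos_squared_add3 mult_1_right)
lemma inner_mult_unit:
  assumes "norm (d::complex) = 1"
  shows "(d * x) \<bullet> (d * y) = x \<bullet> y"
proof -
  have "cnj d * d = 1"
    using assms complex_norm_square[of d] by (simp add: mult.commute)
  then show ?thesis
    by (simp add: inner_mult_right_cnj mult.assoc[symmetric])
qed

lemma sum_shift_periodic:
  fixes f :: "nat \<Rightarrow> 'a::cancel_comm_monoid_add"
  assumes "f n = f 0"
  shows "(\<Sum>k<n. f (Suc k)) = (\<Sum>k<n. f k)"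
proof -
  have "f 0 + (\<Sum>k<n. f (Suc k)) = f 0 + (\<Sum>k<n. f k)"
    using sum.lessThan_Suc_shift[of f n] assms by (simp add: add.commute)
  then show ?thesis by simp
qed

lemma sum_inner_diff_periodic:
  fixes u y :: "nat \<Rightarrow> 'a::real_inner"
  assumes "u n = u 0" "y n = y 0"
  shows "(\<Sum>k<n. u k \<bullet> (y (Suc k) - y k)) = - (\<Sum>k<n. (u (Suc k) - u k) \<bullet> y (Suc k))"
proof -
  have "(\<Sum>k<n. u k \<bullet> y k) = (\<Sum>k<n. u (Suc k) \<bullet> y (Suc k))"
    using assms by (intro sum_shift_periodic[symmetric]) simp
  then show ?thesis
    by (simp add: inner_diff sum_subtractf)
qed

section \<open>Sums over roots of unity\<close>

lemma cis_mod_period: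
  assumes "n > 0"
  shows "cis (2 * pi * real m * real (k mod n) / real n) = cis (2 * pi * real m * real k / real n)"
proof -
  have "real k = real (k mod n) + real n * real (k div n)"
    by (metis mod_div_mult_eq mult.commute of_nat_add of_nat_mult)
  then have "2 * pi * real m * real k / real n
      = 2 * pi * real m * real (k mod n) / real n + 2 * pi * real (m * (k div n))"
    using assms by (simp add: field_simps)
  then show ?thesis by (simp add: cis_mult[symmetric])
qed

lemma sum_cis_multiple_eq_0:
  assumes "\<not> n dvd j"
  shows "(\<Sum>k<n. cis (2 * pi * real j * real k / real n)) = 0"
proof (cases "n = 0")
  case False
  define \<omega> where "\<omega> = cis (2 * pi * real j / real n)"
  have "\<omega> \<noteq> 1"
  proof
    assume "\<omega> = 1"
    then obtain i :: int where "2 * pi * real j / real n = of_int i * (2 * pi)"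
      by (auto simp: \<omega>_def complex_eq_iff cos_one_2pi_int)
    then have "of_int (int j) = (of_int (i * int n) :: real)"
      using False by (simp add: field_simps)
    then have "int j = i * int n"
      by (simp only: of_int_eq_iff)
    then show False
      using assms by (metis dvd_triv_right int_dvd_int_iff mult.commute)
  qed
  have "(\<Sum>k<n. cis (2 * pi * real j * real k / real n)) = (\<Sum>k<n. \<omega> ^ k)"
    by (intro sum.cong refl) (simp add: \<omega>_def Complex.DeMoivre mult_ac)
  also have "\<dots> = (\<omega> ^ n - 1) / (\<omega> - 1)"
    using \<open>\<omega> \<noteq> 1\<close> by (rule geometric_sum)
  also have "\<omega> ^ n = 1"
    using False by (simp add: \<omega>_def Complex.DeMoivre)
  finally show ?thesis by simp
qed simp

lemma Re_mult_Re: "Re u * Re v = (Re (u * v) + Re (u * cnj v)) / 2"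
  by (simp add: algebra_simps)

lemma first_harmonic_shifted_product_sum:
  fixes \<psi> :: "nat \<Rightarrow> real"
  assumes \<psi>_def: "\<And>k. \<psi> k = A * cos (2 * pi * real k / real n) + B * sin (2 * pi * real k / real n)"
    and n: "3 \<le> n"
  shows "(\<Sum>k<n. \<psi> k * \<psi> (k + d)) = real n * (A\<^sup>2 + B\<^sup>2) * cos (2 * pi * real d / real n) / 2"
proof -
  define z where "z = Complex A B"
  have "\<not> n dvd 2"
    using n by (auto dest: dvd_imp_le)
  have \<psi>_Re: "\<psi> j = Re (cnj z * cis (2 * pi * real j / real n))" for j
    by (simp add: \<psi>_def z_def)
  (* psi k psi (k + d) is half the sum of a second harmonic, which sums to 0, and a constant. *)
  have per_term: "\<psi> k * \<psi> (k + d)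
      = (Re (cnj z ^ 2 * cis (2 * pi * real d / real n) * cis (2 * pi * 2 * real k / real n))
         + (cmod z)\<^sup>2 * cos (2 * pi * real d / real n)) / 2" for k
  proof -
    define u v where "u = cis (2 * pi * real k / real n)" and "v = cis (2 * pi * real (k + d) / real n)"
    have "u * v = cis (2 * pi * real d / real n) * cis (2 * pi * 2 * real k / real n)"
      by (simp add: u_def v_def cis_mult add_divide_distrib algebra_simps)
    moreover have "u * cnj v = cis (- (2 * pi * real d / real n))"
      by (simp add: u_def v_def cis_cnj cis_mult add_divide_distrib algebra_simps)
    moreover have "(cnj z * u) * (cnj z * v) = cnj z ^ 2 * (u * v)"
      by (simp add: power2_eq_square mult_ac)
    moreover have "(cnj z * u) * cnj (cnj z * v) = of_real ((cmod z)\<^sup>2) * (u * cnj v)"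
      by (metis (no_types, lifting) complex_cnj_cnj complex_cnj_mult complex_norm_square mult.assoc mult.left_commute)
    ultimately show ?thesis
      unfolding \<psi>_Re u_def[symmetric] v_def[symmetric] Re_mult_Re
      by (simp add: mult.assoc)
  qed
  have "(\<Sum>k<n. \<psi> k * \<psi> (k + d))
      = (Re (cnj z ^ 2 * cis (2 * pi * real d / real n) * (\<Sum>k<n. cis (2 * pi * 2 * real k / real n)))
         + real n * ((cmod z)\<^sup>2 * cos (2 * pi * real d / real n))) / 2"
    by (simp only: per_term sum_divide_distrib[symmetric] sum.distrib Re_sum[symmetric]
        sum_distrib_left[symmetric] sum_constant card_lessThan mult_ac)
  also have "(\<Sum>k<n. cis (2 * pi * 2 * real k / real n)) = 0"
    using sum_cis_multiple_eq_0[of n 2] \<open>\<not> n dvd 2\<close> by simp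
  finally show ?thesis
    by (simp add: z_def cmod_power2)
qed

lemma first_harmonic_sums:
  fixes \<psi> :: "nat \<Rightarrow> real"
  assumes \<psi>_def: "\<And>k. \<psi> k = A * cos (2 * pi * real k / real n) + B * sin (2 * pi * real k / real n)"
    and n: "3 \<le> n"
  shows "(\<Sum>k<n. \<psi> k) = 0"
    and "(\<Sum>k<n. (\<psi> k)\<^sup>2) = real n * (A\<^sup>2 + B\<^sup>2) / 2"
    and "(\<Sum>k<n. \<psi> k * \<psi> (Suc k)) = cos (2 * pi / real n) * (\<Sum>k<n. (\<psi> k)\<^sup>2)"
proof -
  have "(\<Sum>k<n. cis (2 * pi * real k / real n)) = 0"
    using n sum_cis_multiple_eq_0[of n 1] by simp
  then have "Re (Complex A (- B) * (\<Sum>k<n. cis (2 * pi * real k / real n))) = 0"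
    by simp
  then show "(\<Sum>k<n. \<psi> k) = 0"
    by (simp add: \<psi>_def sum_distrib_left Re_sum)
  show S2: "(\<Sum>k<n. (\<psi> k)\<^sup>2) = real n * (A\<^sup>2 + B\<^sup>2) / 2"
    using first_harmonic_shifted_product_sum[OF \<psi>_def n, of 0] by (simp add: power2_eq_square)
  show "(\<Sum>k<n. \<psi> k * \<psi> (Suc k)) = cos (2 * pi / real n) * (\<Sum>k<n. (\<psi> k)\<^sup>2)"
    using first_harmonic_shifted_product_sum[OF \<psi>_def n, of 1] by (simp add: S2)
qed

lemma first_harmonic_mod:
  fixes \<psi> :: "nat \<Rightarrow> real"
  assumes "\<And>k. \<psi> k = A * cos (2 * pi * real k / real n) + B * sin (2 * pi * real k / real n)"
    and "0 < n"
  shows "\<psi> (k mod n) = \<psi> k"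
  using cis_mod_period[OF assms(2), of 1 k] by (simp add: assms(1) complex_eq_iff)

section \<open>Trigonometric estimates\<close>

lemma sin_sq_minus_cos_double_tan_sq:
  fixes x :: real
  assumes "cos x \<noteq> 0"
  shows "(sin x)\<^sup>2 - cos (2 * x) * (tan x)\<^sup>2 = (sin x)^4 / (cos x)\<^sup>2"
  unfolding cos_double tan_def using assms
  by (simp add: power_divide field_simps)

lemma tan_sq_le_tan_sq:
  fixes y \<theta> :: real
  assumes "cos \<theta> \<noteq> 0" and "(cos \<theta>)\<^sup>2 \<le> (cos y)\<^sup>2"
  shows "(tan y)\<^sup>2 \<le> (tan \<theta>)\<^sup>2"
proof -
  have tan_sq: "(tan z)\<^sup>2 = 1 / (cos z)\<^sup>2 - 1" if "cos z \<noteq> 0" for z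
    using that sin_cos_squared_add[of z] by (simp add: tan_def power_divide field_simps)
  have "cos y \<noteq> 0"
  proof
    assume "cos y = 0"
    with assms(2) have "(cos \<theta>)\<^sup>2 \<le> 0"
      by simp
    with assms(1) show False
      by simp
  qed
  have "1 / (cos y)\<^sup>2 \<le> 1 / (cos \<theta>)\<^sup>2"
    using assms \<open>cos y \<noteq> 0\<close> by (intro divide_left_mono) auto
  then show ?thesis
    using tan_sq[OF assms(1)] tan_sq[OF \<open>cos y \<noteq> 0\<close>] by linarith
qed

lemma sin_sq_less_cos_double_tan_double_sq:
  fixes x :: real
  assumes "0 < x" "x < pi / 4"
  shows "(sin x)\<^sup>2 < cos (2 * x) * (tan (2 * x))\<^sup>2"
proof -
  have "0 < cos (2 * x)" "0 < sin x"
    using assms by (auto intro!: cos_gt_zero_pi sin_gt_zero)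
  have "cos (2 * x) < 4 * (cos x)\<^sup>2"
    using cos_double_cos[of x] zero_le_power2[of "cos x"] by linarith
  then have "(sin x)\<^sup>2 * cos (2 * x) < (sin x)\<^sup>2 * (4 * (cos x)\<^sup>2)"
    using \<open>0 < sin x\<close> by simp
  also have "\<dots> = (sin (2 * x))\<^sup>2"
    by (simp add: sin_double power_mult_distrib)
  finally show ?thesis
    using \<open>0 < cos (2 * x)\<close> by (simp add: tan_def power_divide field_simps power2_eq_square)
qed

section \<open>The regular star polygon\<close>

locale regular_star_polygon =
  fixes n m :: nat and a \<sigma> :: real
  assumes m_pos: "0 < m" and m_less: "m < n" and double_m_ne: "2 * m \<noteq> n"
    and a_pos: "0 < a" and sign: "\<sigma> = 1 \<or> \<sigma> = -1"
begin

definition "\<beta> = real m * pi / real n"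
definition "dir k = cis (2 * pi * real m * real k / real n)"
definition "\<alpha> = 2 * \<beta>"
definition "side = 2 * a * sin \<beta>"
definition "normal_scale = - \<sigma> / cos \<beta>"

abbreviation "turn \<equiv> cis \<alpha>"
abbreviation "quarter_turn \<equiv> cis (\<sigma> * pi / 2)"
abbreviation "p \<equiv> Gamma a m n"

lemma beta_eq: "real m * pi / real n = \<beta>"
  by (simp add: \<beta>_def)

lemma n_pos: "0 < n"
  using m_less by simp

lemma beta_pos: "0 < \<beta>" and beta_less_pi: "\<beta> < pi"
  using m_pos m_less by (simp_all add: \<beta>_def field_simps)

lemma sin_beta_pos: "0 < sin \<beta>"
  using beta_pos beta_less_pi by (rule sin_gt_zero)

lemma cos_beta_nonzero: "cos \<beta> \<noteq> 0"
proof
  assume "cos \<beta> = 0"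
  then have "\<beta> = pi / 2"
    using cos_inj_pi[of \<beta> "pi / 2"] beta_pos beta_less_pi by simp
  then have "real (2 * m) = real n"
    using n_pos by (simp add: \<beta>_def field_simps)
  then show False
    using double_m_ne by linarith
qed

lemma sin_alpha: "sin \<alpha> = 2 * sin \<beta> * cos \<beta>"
  by (simp add: \<alpha>_def sin_double)

lemma cos_alpha_sin: "cos \<alpha> = 1 - 2 * (sin \<beta>)\<^sup>2"
  by (simp add: \<alpha>_def cos_double_sin)

lemma cos_alpha_cos: "cos \<alpha> = 2 * (cos \<beta>)\<^sup>2 - 1"
  by (simp add: \<alpha>_def cos_double_cos)

lemma turn_cnj: "turn * cnj turn = 1"
  by (simp add: cis_cnj cis_mult)

lemma side_pos: "0 < side"
  using a_pos sin_beta_pos by (simp add: side_def)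

lemma quarter_turn_eq: "quarter_turn = complex_of_real \<sigma> * \<i>"
  using sign by (auto simp: complex_eq_iff)

lemma dir_Suc: "dir (Suc k) = turn * dir k"
  by (simp add: dir_def \<alpha>_def \<beta>_def cis_mult add_divide_distrib algebra_simps)

lemma dir_mod: "dir (k mod n) = dir k"
  unfolding dir_def using n_pos by (rule cis_mod_period)

lemma norm_dir [simp]: "norm (dir k) = 1"
  by (simp add: dir_def)

lemma dir_prev_idx: "dir (prev_idx n k) = cnj turn * dir k"
proof -
  have "dir k = dir (Suc (k + n - 1))"
    using n_pos dir_mod[of "k + n"] dir_mod[of k] by simp
  also have "\<dots> = turn * dir (prev_idx n k)"
    by (simp add: dir_Suc prev_idx_def dir_mod)
  finally have "cnj turn * dir k = (turn * cnj turn) * dir (prev_idx n k)"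
    by (simp add: algebra_simps)
  then show ?thesis
    by (simp add: turn_cnj)
qed

lemma Gamma_eq: "p k = of_real a * dir k"
  by (simp add: Gamma_def dir_def)

lemma Gamma_mod: "p (k mod n) = p k"
  by (simp add: Gamma_eq dir_mod)

lemma turn_minus_1: "turn - 1 = cis \<beta> * (of_real (2 * sin \<beta>) * \<i>)"
  by (simp add: complex_eq_iff cos_alpha_sin sin_alpha power2_eq_square algebra_simps)

lemma Gamma_edge: "p (Suc k) - p k = of_real a * dir k * (turn - 1)"
  by (simp add: Gamma_eq dir_Suc algebra_simps)

lemma edge_len_Gamma: "edge_len n p k = side"
  using a_pos sin_beta_pos
  by (simp add: edge_len_def Gamma_mod Gamma_edge turn_minus_1 norm_mult side_def)

lemma edge_normal_Gamma: "edge_normal \<sigma> n p k = - of_real \<sigma> * cis \<beta> * dir k"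
proof -
  have "p (Suc k mod n) - p (k mod n)
      = of_real side * (cis \<beta> * \<i> * dir k)"
    by (simp add: Gamma_mod Gamma_edge turn_minus_1 side_def algebra_simps)
  then show ?thesis
    using side_pos unfolding edge_normal_def rot_def quarter_turn_eq
    by (simp add: edge_len_Gamma) (simp add: algebra_simps)
qed

lemma cos_signed_angle_Gamma: "cos (signed_angle \<sigma> n p k) = cos \<alpha>"
proof -
  have "edge_normal \<sigma> n p k = turn * edge_normal \<sigma> n p (prev_idx n k)"
    by (simp add: edge_normal_Gamma dir_prev_idx mult.left_commute[of turn] mult.assoc[symmetric] turn_cnj)
  moreover have "edge_normal \<sigma> n p (prev_idx n k) \<noteq> 0"
    using sign by (auto simp: edge_normal_Gamma dir_def)
  ultimately have "signed_angle \<sigma> n p k = Arg (cis (\<sigma> * \<alpha>))"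
    by (rule signed_angle_eq_Arg[OF sign])
  then show ?thesis
    using sign by (auto simp: cos_Arg_cis)
qed

lemma vertex_normal_Gamma: "vertex_normal \<sigma> n p k = of_real normal_scale * dir k"
proof -
  have "cis \<beta> * cnj turn = cis (- \<beta>)"
    by (simp add: cis_cnj cis_mult \<alpha>_def)
  then have fold_cos: "cis \<beta> * (1 + cnj turn) = of_real (2 * cos \<beta>)"
    by (simp add: distrib_left complex_eq_iff)
  have "vertex_normal \<sigma> n p k
      = (1 / (1 + cos \<alpha>)) *\<^sub>R (- of_real \<sigma> * (cis \<beta> * (1 + cnj turn)) * dir k)"
    by (simp add: vertex_normal_def cos_signed_angle_Gamma edge_normal_Gamma dir_prev_idx algebra_simps)
  also have "\<dots> = (1 / (2 * cos \<beta> * cos \<beta>)) *\<^sub>R (- of_real \<sigma> * of_real (2 * cos \<beta>) * dir k)"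
    by (simp only: fold_cos cos_alpha_cos power2_eq_square) simp
  also have "\<dots> = of_real normal_scale * dir k"
    using cos_beta_nonzero by (simp add: normal_scale_def scaleR_conv_of_real field_simps)
  finally show ?thesis .
qed

lemma dir_periodic: "dir n = dir 0"
  using dir_mod[of n] by simp

lemma Gamma_add_n: "p (k + n) = p k"
  using Gamma_mod[of "k + n"] Gamma_mod[of k] by simp

lemma Gamma_edge_Suc: "p (Suc k) - p k = of_real a * (1 - cnj turn) * dir (Suc k)"
  using turn_cnj by (simp add: Gamma_edge dir_Suc algebra_simps)

lemma turn_add_cnj: "turn + cnj turn = of_real (2 * cos \<alpha>)"
  by (simp add: complex_eq_iff)

lemma sum_Gamma_edge_inner_diff:
  assumes "R n = R 0"
  shows "(\<Sum>k<n. (p (Suc k) - p k) \<bullet> (R (Suc k) - R k))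
       = 2 * a * (1 - cos \<alpha>) * (\<Sum>k<n. dir k \<bullet> R k)"
proof -
  have second_diff: "(p (Suc (Suc k)) - p (Suc k)) - (p (Suc k) - p k)
      = - (of_real (2 * a * (1 - cos \<alpha>)) * dir (Suc k))" for k
  proof -
    have "(p (Suc (Suc k)) - p (Suc k)) - (p (Suc k) - p k)
        = of_real a * ((turn - 1) * (1 - cnj turn)) * dir (Suc k)"
      unfolding Gamma_edge_Suc dir_Suc[of "Suc k"] by (simp add: algebra_simps)
    also have "(turn - 1) * (1 - cnj turn) = (turn + cnj turn) - 1 - turn * cnj turn"
      by (simp add: algebra_simps)
    finally show ?thesis
      by (simp add: turn_add_cnj turn_cnj algebra_simps)
  qed
  have "(\<Sum>k<n. (p (Suc k) - p k) \<bullet> (R (Suc k) - R k))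
      = - (\<Sum>k<n. ((p (Suc (Suc k)) - p (Suc k)) - (p (Suc k) - p k)) \<bullet> R (Suc k))"
    using assms by (intro sum_inner_diff_periodic) (use Gamma_add_n[of 0] Gamma_add_n[of 1] in simp_all)
  also have "\<dots> = 2 * a * (1 - cos \<alpha>) * (\<Sum>k<n. dir (Suc k) \<bullet> R (Suc k))"
    by (simp only: second_diff inner_minus_left inner_of_real_mult_left sum_negf minus_minus
        sum_distrib_left)
  also have "(\<Sum>k<n. dir (Suc k) \<bullet> R (Suc k)) = (\<Sum>k<n. dir k \<bullet> R k)"
    using assms by (intro sum_shift_periodic) (simp add: dir_periodic)
  finally show ?thesis .
qed

lemma cnj_quarter_turn: "cnj quarter_turn = - quarter_turn"
  by (simp add: quarter_turn_eq)

lemma quarter_turn_mult_turn_diff: "quarter_turn * (turn - cnj turn) = of_real (- 2 * \<sigma> * sin \<alpha>)"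
  by (simp add: quarter_turn_eq complex_eq_iff)

lemma sum_Gamma_volume_accel:
  assumes "R n = R 0"
  shows "(\<Sum>k<n. R k \<bullet> (quarter_turn * (p (Suc k) - p k)) + p k \<bullet> (quarter_turn * (R (Suc k) - R k)))
       = - 2 * \<sigma> * a * sin \<alpha> * (\<Sum>k<n. dir k \<bullet> R k)"
proof -
  define J where "J = quarter_turn"
  have "(\<Sum>k<n. p k \<bullet> (J * (R (Suc k) - R k))) = (\<Sum>k<n. (- J * p k) \<bullet> (R (Suc k) - R k))"
    by (simp add: inner_mult_right_cnj J_def cnj_quarter_turn)
  also have "\<dots> = - (\<Sum>k<n. (- J * p (Suc k) - - J * p k) \<bullet> R (Suc k))"
    using assms by (intro sum_inner_diff_periodic) (use Gamma_add_n[of 0] in simp_all)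
  also have "\<dots> = (\<Sum>k<n. (J * (of_real a * (1 - cnj turn) * dir (Suc k))) \<bullet> R (Suc k))"
  proof -
    have "- J * p (Suc k) - - J * p k = - (J * (of_real a * (1 - cnj turn) * dir (Suc k)))" for k
      unfolding Gamma_edge_Suc[symmetric] by (simp add: algebra_simps)
    then show ?thesis
      by (simp only: inner_minus_left sum_negf minus_minus)
  qed
  also have "\<dots> = (\<Sum>k<n. (J * (of_real a * (1 - cnj turn) * dir k)) \<bullet> R k)"
    using assms by (intro sum_shift_periodic) (simp add: dir_periodic)
  finally have vol_part: "(\<Sum>k<n. p k \<bullet> (J * (R (Suc k) - R k)))
      = (\<Sum>k<n. (J * (of_real a * (1 - cnj turn) * dir k)) \<bullet> R k)" .
  have edge_part: "R k \<bullet> (J * (p (Suc k) - p k)) = (J * (of_real a * (turn - 1) * dir k)) \<bullet> R k" for k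
    by (simp add: Gamma_edge inner_commute mult_ac)
  have combined: "J * (of_real a * (turn - 1) * dir k) + J * (of_real a * (1 - cnj turn) * dir k)
      = of_real (- 2 * \<sigma> * a * sin \<alpha>) * dir k" for k
  proof -
    have "J * (of_real a * (turn - 1) * dir k) + J * (of_real a * (1 - cnj turn) * dir k)
        = of_real a * (J * (turn - cnj turn)) * dir k"
      by (simp add: algebra_simps)
    then show ?thesis
      by (simp add: J_def quarter_turn_mult_turn_diff)
  qed
  have "(\<Sum>k<n. R k \<bullet> (J * (p (Suc k) - p k)) + p k \<bullet> (J * (R (Suc k) - R k)))
      = (\<Sum>k<n. (of_real (- 2 * \<sigma> * a * sin \<alpha>) * dir k) \<bullet> R k)"
    by (simp only: sum.distrib edge_part vol_part sum.distrib[symmetric] inner_add_left[symmetric]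
        combined)
  then show ?thesis
    unfolding J_def by (simp only: inner_of_real_mult_left sum_distrib_left)
qed

definition "normal_variation \<psi> k = of_real (normal_scale * \<psi> k) * dir k"

lemma normal_variation_diff:
  "normal_variation \<psi> (Suc k) - normal_variation \<psi> k
     = dir k * (of_real normal_scale * (of_real (\<psi> (Suc k)) * turn - of_real (\<psi> k)))"
  by (simp add: normal_variation_def dir_Suc algebra_simps)

lemma inner_normal_variation_diff:
  "(normal_variation \<psi> (Suc k) - normal_variation \<psi> k) \<bullet> (normal_variation \<psi> (Suc k) - normal_variation \<psi> k)
     = normal_scale\<^sup>2 * ((\<psi> (Suc k))\<^sup>2 - 2 * cos \<alpha> * \<psi> k * \<psi> (Suc k) + (\<psi> k)\<^sup>2)"
  unfolding normal_variation_diff inner_mult_unit[OF norm_dir]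
  by (simp add: inner_cis_combination_self power2_eq_square)

lemma inner_Gamma_edge_normal_variation_diff:
  "(p (Suc k) - p k) \<bullet> (normal_variation \<psi> (Suc k) - normal_variation \<psi> k)
     = a * normal_scale * (1 - cos \<alpha>) * (\<psi> k + \<psi> (Suc k))"
proof -
  have "p (Suc k) - p k = dir k * (of_real a * (turn - 1))"
    by (simp add: Gamma_edge mult_ac)
  then have "(p (Suc k) - p k) \<bullet> (normal_variation \<psi> (Suc k) - normal_variation \<psi> k)
      = (dir k * (of_real a * (turn - 1)))
        \<bullet> (dir k * (of_real normal_scale * (of_real (\<psi> (Suc k)) * turn - of_real (\<psi> k))))"
    by (simp only: normal_variation_diff)
  also have "\<dots> = a * normal_scale * ((turn - 1) \<bullet> (of_real (\<psi> (Suc k)) * turn - of_real (\<psi> k)))"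
    by (simp only: inner_mult_unit[OF norm_dir] inner_of_real_mult_left inner_of_real_mult_right mult_ac)
  finally show ?thesis
    by (simp add: inner_cis_minus_1_combination)
qed

lemma inner_normal_variation_quarter_turn:
  "normal_variation \<psi> k \<bullet> (quarter_turn * (normal_variation \<psi> (Suc k) - normal_variation \<psi> k))
     = - \<sigma> * normal_scale\<^sup>2 * sin \<alpha> * \<psi> k * \<psi> (Suc k)"
proof -
  have "normal_variation \<psi> k \<bullet> (quarter_turn * (normal_variation \<psi> (Suc k) - normal_variation \<psi> k))
      = (dir k * of_real (normal_scale * \<psi> k))
        \<bullet> (dir k * (of_real (\<sigma> * normal_scale) * (\<i> * (of_real (\<psi> (Suc k)) * turn - of_real (\<psi> k)))))"
    unfolding normal_variation_diff quarter_turn_eq by (simp add: normal_variation_def mult_ac)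
  then show ?thesis
    unfolding inner_mult_unit[OF norm_dir] by (simp add: inner_complex_def power2_eq_square)
qed

lemma norm_Gamma_edge: "norm (p (Suc k) - p k) = side"
  using a_pos sin_beta_pos by (simp add: Gamma_edge turn_minus_1 norm_mult side_def)

lemma side_squared: "side\<^sup>2 = 2 * a\<^sup>2 * (1 - cos \<alpha>)"
  by (simp add: side_def cos_alpha_sin power_mult_distrib)

lemma sin_alpha_nonzero: "sin \<alpha> \<noteq> 0"
  using sin_beta_pos cos_beta_nonzero by (simp add: sin_alpha)

lemma sum_inner_normal_variation_diff:
  assumes "\<psi> n = \<psi> 0"
  shows "(\<Sum>k<n. (normal_variation \<psi> (Suc k) - normal_variation \<psi> k)
            \<bullet> (normal_variation \<psi> (Suc k) - normal_variation \<psi> k))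
       = normal_scale\<^sup>2 * (2 * (\<Sum>k<n. (\<psi> k)\<^sup>2) - 2 * cos \<alpha> * (\<Sum>k<n. \<psi> k * \<psi> (Suc k)))"
proof -
  have shift: "(\<Sum>k<n. (\<psi> (Suc k))\<^sup>2) = (\<Sum>k<n. (\<psi> k)\<^sup>2)"
    using assms by (intro sum_shift_periodic) simp
  have "(\<Sum>k<n. (normal_variation \<psi> (Suc k) - normal_variation \<psi> k)
            \<bullet> (normal_variation \<psi> (Suc k) - normal_variation \<psi> k))
      = normal_scale\<^sup>2 * ((\<Sum>k<n. (\<psi> (Suc k))\<^sup>2) - 2 * cos \<alpha> * (\<Sum>k<n. \<psi> k * \<psi> (Suc k))
          + (\<Sum>k<n. (\<psi> k)\<^sup>2))"
    by (simp only: inner_normal_variation_diff sum_distrib_left[symmetric] sum.distrib sum_subtractf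
        mult.assoc)
  then show ?thesis
    by (simp add: shift)
qed

lemma sum_sq_inner_Gamma_edge_normal_variation_diff:
  assumes "\<psi> n = \<psi> 0"
  shows "(\<Sum>k<n. ((p (Suc k) - p k) \<bullet> (normal_variation \<psi> (Suc k) - normal_variation \<psi> k))\<^sup>2)
       = a\<^sup>2 * normal_scale\<^sup>2 * (1 - cos \<alpha>)\<^sup>2 * (2 * (\<Sum>k<n. (\<psi> k)\<^sup>2) + 2 * (\<Sum>k<n. \<psi> k * \<psi> (Suc k)))"
proof -
  have shift: "(\<Sum>k<n. (\<psi> (Suc k))\<^sup>2) = (\<Sum>k<n. (\<psi> k)\<^sup>2)"
    using assms by (intro sum_shift_periodic) simp
  have "(\<Sum>k<n. ((p (Suc k) - p k) \<bullet> (normal_variation \<psi> (Suc k) - normal_variation \<psi> k))\<^sup>2)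
      = a\<^sup>2 * normal_scale\<^sup>2 * (1 - cos \<alpha>)\<^sup>2
        * (\<Sum>k<n. (\<psi> k)\<^sup>2 + (\<psi> (Suc k))\<^sup>2 + 2 * (\<psi> k * \<psi> (Suc k)))"
    by (simp only: inner_Gamma_edge_normal_variation_diff power_mult_distrib power2_sum mult.assoc
        sum_distrib_left[symmetric])
  then show ?thesis
    by (simp add: sum.distrib sum_distrib_left[symmetric] shift)
qed

(* The accelerations R enter the second variation of the length only through
   sum_k dir k . R k (see sum_Gamma_edge_inner_diff); the area constraint pins down exactly
   this quantity. *)
lemma volume_constraint_Gamma:
  assumes R_periodic: "R n = R 0"
    and volume: "(\<Sum>k<n. R k \<bullet> (quarter_turn * (p (Suc k) - p k))
        + 2 * (normal_variation \<psi> k \<bullet> (quarter_turn * (normal_variation \<psi> (Suc k) - normal_variation \<psi> k)))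
        + p k \<bullet> (quarter_turn * (R (Suc k) - R k))) = 0"
  shows "a * (\<Sum>k<n. dir k \<bullet> R k) = - normal_scale\<^sup>2 * (\<Sum>k<n. \<psi> k * \<psi> (Suc k))"
proof -
  have split: "(\<Sum>k<n. A k + 2 * B k + C k) = (\<Sum>k<n. A k + C k) + 2 * (\<Sum>k<n. B k)"
    for A B C :: "nat \<Rightarrow> real"
    by (simp add: sum.distrib sum_distrib_left)
  have normal_part: "(\<Sum>k<n. normal_variation \<psi> k \<bullet> (quarter_turn * (normal_variation \<psi> (Suc k) - normal_variation \<psi> k)))
      = - \<sigma> * normal_scale\<^sup>2 * sin \<alpha> * (\<Sum>k<n. \<psi> k * \<psi> (Suc k))"
    by (simp add: inner_normal_variation_quarter_turn sum_distrib_left mult.assoc)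
  have "- 2 * \<sigma> * a * sin \<alpha> * (\<Sum>k<n. dir k \<bullet> R k)
      + 2 * (- \<sigma> * normal_scale\<^sup>2 * sin \<alpha> * (\<Sum>k<n. \<psi> k * \<psi> (Suc k))) = 0"
    using volume by (simp only: split sum_Gamma_volume_accel[OF R_periodic] normal_part)
  then have "(2 * \<sigma> * sin \<alpha>) * (a * (\<Sum>k<n. dir k \<bullet> R k) + normal_scale\<^sup>2 * (\<Sum>k<n. \<psi> k * \<psi> (Suc k))) = 0"
    by algebra
  moreover have "2 * \<sigma> * sin \<alpha> \<noteq> 0"
    using sign sin_alpha_nonzero by auto
  ultimately show ?thesis
    by simp
qed

lemma sum_norm_second_deriv_Gamma:
  fixes \<psi> :: "nat \<Rightarrow> real" and R :: "nat \<Rightarrow> complex"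
  defines "q \<equiv> normal_variation \<psi>"
  assumes \<psi>_periodic: "\<psi> n = \<psi> 0" and R_periodic: "R n = R 0"
    and volume: "(\<Sum>k<n. R k \<bullet> (quarter_turn * (p (Suc k) - p k))
        + 2 * (q k \<bullet> (quarter_turn * (q (Suc k) - q k))) + p k \<bullet> (quarter_turn * (R (Suc k) - R k))) = 0"
  shows "(\<Sum>k<n. norm_second_deriv (p (Suc k) - p k) (q (Suc k) - q k) (R (Suc k) - R k))
       = normal_scale\<^sup>2 / side * ((1 + cos \<alpha>) * (\<Sum>k<n. (\<psi> k)\<^sup>2) + (cos \<alpha> - 3) * (\<Sum>k<n. \<psi> k * \<psi> (Suc k)))"
proof -
  define S2 where "S2 = (\<Sum>k<n. (\<psi> k)\<^sup>2)"
  define S1 where "S1 = (\<Sum>k<n. \<psi> k * \<psi> (Suc k))"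
  define X where "X = (\<Sum>k<n. dir k \<bullet> R k)"
  have "(\<Sum>k<n. norm_second_deriv (p (Suc k) - p k) (q (Suc k) - q k) (R (Suc k) - R k))
      = ((\<Sum>k<n. (q (Suc k) - q k) \<bullet> (q (Suc k) - q k)) + (\<Sum>k<n. (p (Suc k) - p k) \<bullet> (R (Suc k) - R k))) / side
        - (\<Sum>k<n. ((p (Suc k) - p k) \<bullet> (q (Suc k) - q k))\<^sup>2) / side ^ 3"
    by (simp only: norm_second_deriv_def norm_Gamma_edge sum_subtractf sum_divide_distrib[symmetric]
        sum.distrib)
  also have "\<dots> = (normal_scale\<^sup>2 * (2 * S2 - 2 * cos \<alpha> * S1) + 2 * a * (1 - cos \<alpha>) * X) / side
        - a\<^sup>2 * normal_scale\<^sup>2 * (1 - cos \<alpha>)\<^sup>2 * (2 * S2 + 2 * S1) / side ^ 3"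
    unfolding q_def sum_inner_normal_variation_diff[OF \<psi>_periodic]
      sum_sq_inner_Gamma_edge_normal_variation_diff[OF \<psi>_periodic]
      sum_Gamma_edge_inner_diff[OF R_periodic] S1_def S2_def X_def ..
  also have "\<dots> = normal_scale\<^sup>2 / side * ((1 + cos \<alpha>) * S2 + (cos \<alpha> - 3) * S1)"
  proof -
    have edge_sq: "a\<^sup>2 * normal_scale\<^sup>2 * (1 - cos \<alpha>)\<^sup>2 = normal_scale\<^sup>2 * (1 - cos \<alpha>) * side\<^sup>2 / 2"
      unfolding side_squared by (simp add: power2_eq_square)
    have accel: "2 * a * (1 - cos \<alpha>) * X = - 2 * (1 - cos \<alpha>) * normal_scale\<^sup>2 * S1"
      using volume_constraint_Gamma[OF R_periodic volume[unfolded q_def]] unfolding X_def S1_def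
      by algebra
    show ?thesis
      unfolding edge_sq accel using side_pos by (simp add: power2_eq_square power3_eq_cube field_simps)
  qed
  finally show ?thesis
    by (simp only: S1_def S2_def)
qed

lemma length_second_derivative_Gamma:
  fixes \<psi> :: "nat \<Rightarrow> real" and P :: "real \<Rightarrow> nat \<Rightarrow> complex" and P' P'' :: "nat \<Rightarrow> real \<Rightarrow> complex"
  assumes \<psi>_mod: "\<And>k. \<psi> (k mod n) = \<psi> k"
    and \<epsilon>: "\<epsilon> > 0"
    and closed: "\<forall>t\<in>ball 0 \<epsilon>. closed_discrete_curve n (P t)"
    and P': "\<forall>k<n. \<forall>t\<in>ball 0 \<epsilon>. ((\<lambda>s. P s k) has_vector_derivative P' k t) (at t)"
    and P'': "\<forall>k<n. \<forall>t\<in>ball 0 \<epsilon>. (P' k has_vector_derivative P'' k t) (at t)"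
    and P_0: "\<forall>k<n. P 0 k = p k"
    and vol: "\<forall>t\<in>ball 0 \<epsilon>. curve_vol \<sigma> n (P t) = curve_vol \<sigma> n (P 0)"
    and P'_0: "\<forall>k<n. P' k 0 = \<psi> k *\<^sub>R vertex_normal \<sigma> n p k"
  shows "(deriv (\<lambda>t. curve_length n (P t)) has_real_derivative
           normal_scale\<^sup>2 / side * ((1 + cos \<alpha>) * (\<Sum>k<n. (\<psi> k)\<^sup>2)
             + (cos \<alpha> - 3) * (\<Sum>k<n. \<psi> k * \<psi> (Suc k)))) (at 0)"
proof -
  define R where "R k = P'' (k mod n) 0" for k
  have x: "P 0 (k mod n) = p k" for k
    using P_0 n_pos by (simp add: Gamma_mod)
  have v: "P' (k mod n) 0 = normal_variation \<psi> k" for k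
    using P'_0 n_pos
    by (simp add: vertex_normal_Gamma normal_variation_def scaleR_conv_of_real \<psi>_mod dir_mod)
  note length = curve_length_second_derivative[OF \<epsilon> closed P' P'', unfolded x v R_def[symmetric]]
  note volume = curve_vol_second_variation[OF \<epsilon> closed P' P'' vol, unfolded x v R_def[symmetric]]
  have "(\<Sum>k<n. norm_second_deriv (p (Suc k) - p k)
      (normal_variation \<psi> (Suc k) - normal_variation \<psi> k) (R (Suc k) - R k))
      = normal_scale\<^sup>2 / side * ((1 + cos \<alpha>) * (\<Sum>k<n. (\<psi> k)\<^sup>2)
          + (cos \<alpha> - 3) * (\<Sum>k<n. \<psi> k * \<psi> (Suc k)))"
  proof (rule sum_norm_second_deriv_Gamma)
    show "\<psi> n = \<psi> 0"
      using \<psi>_mod[of n] \<psi>_mod[of 0] by simp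
    show "R n = R 0"
      by (simp add: R_def)
  qed (rule volume)
  with length show ?thesis
    by simp
qed

lemma second_variation_value:
  "normal_scale\<^sup>2 / side * ((1 + cos \<alpha>) * S + (cos \<alpha> - 3) * (cos (2 * pi / real n) * S))
     = 4 / (2 * a * \<bar>sin (real m * pi / real n)\<bar>)
       * ((sin (pi / real n))\<^sup>2 - cos (2 * pi / real n) * (tan (real m * pi / real n))\<^sup>2) * S"
proof -
  have cos_double_sin: "cos (2 * pi / real n) = 1 - 2 * (sin (pi / real n))\<^sup>2"
    using cos_double_sin[of "pi / real n"] by simp
  have tan_sq: "(tan \<beta>)\<^sup>2 = (1 - (cos \<beta>)\<^sup>2) / (cos \<beta>)\<^sup>2"
    by (simp add: tan_def power_divide sin_squared_eq)
  have normal_scale_sq: "normal_scale\<^sup>2 = 1 / (cos \<beta>)\<^sup>2"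
    using sign by (auto simp: normal_scale_def power_divide)
  show ?thesis
    unfolding beta_eq cos_double_sin tan_sq cos_alpha_cos side_def normal_scale_sq
    using sin_beta_pos cos_beta_nonzero a_pos by (simp add: field_simps)
qed

lemma bracket_nonneg_extreme:
  assumes "m = 1 \<or> m = n - 1"
  shows "0 \<le> (sin (pi / real n))\<^sup>2 - cos (2 * pi / real n) * (tan (real m * pi / real n))\<^sup>2"
proof -
  define x where "x = pi / real n"
  have "cos \<beta> = cos x \<and> (tan \<beta>)\<^sup>2 = (tan x)\<^sup>2 \<or> cos \<beta> = - cos x \<and> (tan \<beta>)\<^sup>2 = (tan x)\<^sup>2"
  proof (cases "m = 1")
    case False
    then have "real m = real n - 1"
      using assms n_pos by (auto simp: of_nat_diff)
    then have "\<beta> = pi - x"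
      using n_pos unfolding \<beta>_def x_def \<open>real m = real n - 1\<close> by (simp add: field_simps)
    then show ?thesis
      by (simp add: tan_def power_divide)
  next
    case True
    then show ?thesis
      unfolding \<beta>_def x_def by simp
  qed
  then have "cos x \<noteq> 0" and "(tan (real m * pi / real n))\<^sup>2 = (tan x)\<^sup>2"
    using cos_beta_nonzero by (auto simp: beta_eq)
  then show ?thesis
    unfolding x_def using sin_sq_minus_cos_double_tan_sq[of x] by (simp add: x_def mult.assoc)
qed

lemma bracket_neg_middle:
  assumes "5 \<le> n" "2 \<le> m" "m \<le> n - 2"
  shows "(sin (pi / real n))\<^sup>2 - cos (2 * pi / real n) * (tan (real m * pi / real n))\<^sup>2 < 0"
proof -
  define x where "x = pi / real n"
  have "0 < x" "x < pi / 4"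
    using assms(1) by (simp_all add: x_def field_simps)
  have "real m + 2 \<le> real n"
    using assms by linarith
  then have "pi * (real m + 2) \<le> pi * real n" and "pi * 2 \<le> pi * real m"
    using assms(2) by simp_all
  then have "2 * x \<le> \<beta>" "\<beta> \<le> pi - 2 * x"
    using n_pos unfolding x_def \<beta>_def by (simp_all add: field_simps)
  then have "cos \<beta> \<le> cos (2 * x)" "cos (pi - 2 * x) \<le> cos \<beta>"
    using \<open>0 < x\<close> \<open>x < pi / 4\<close>
    by (intro cos_monotone_0_pi_le; linarith)+
  then have "(cos \<beta>)\<^sup>2 \<le> (cos (2 * x))\<^sup>2"
    by (intro power2_le_iff_abs_le[THEN iffD2]) auto
  then have "(tan (2 * x))\<^sup>2 \<le> (tan \<beta>)\<^sup>2"
    using cos_beta_nonzero by (rule tan_sq_le_tan_sq[rotated])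
  moreover have "0 < cos (2 * x)"
    using \<open>0 < x\<close> \<open>x < pi / 4\<close> by (intro cos_gt_zero_pi) auto
  ultimately have "cos (2 * x) * (tan (2 * x))\<^sup>2 \<le> cos (2 * x) * (tan \<beta>)\<^sup>2"
    by simp
  with sin_sq_less_cos_double_tan_double_sq[OF \<open>0 < x\<close> \<open>x < pi / 4\<close>] show ?thesis
    by (simp add: x_def beta_eq mult.assoc)
qed

end

theorem mainTheorem16:
  fixes n m :: nat and a A B \<sigma> :: real
  assumes hn: "n \<ge> 5" and hm1: "1 \<le> m" and hm2: "m \<le> n - 1" and hm3: "2 * m \<noteq> n"
    and ha: "a > 0" and h\<sigma>: "\<sigma> = 1 \<or> \<sigma> = -1"
  defines "\<psi> \<equiv> (\<lambda>k::nat. A * cos (2 * pi * real k / real n) + B * sin (2 * pi * real k / real n))"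
    and "l0 \<equiv> 2 * a * \<bar>sin (real m * pi / real n)\<bar>"
  defines "V \<equiv> 4 / l0 * ((sin (pi / real n))\<^sup>2 - cos (2 * pi / real n) * (tan (real m * pi / real n))\<^sup>2)
                 * (\<Sum>k<n. (\<psi> k)\<^sup>2)"
  shows "(\<Sum>k<n. \<psi> k) = 0
    \<and> (\<forall>(\<epsilon>::real) (P :: real \<Rightarrow> nat \<Rightarrow> complex) (P' :: nat \<Rightarrow> real \<Rightarrow> complex)
          (P'' :: nat \<Rightarrow> real \<Rightarrow> complex).
          \<epsilon> > 0
        \<and> (\<forall>t\<in>ball 0 \<epsilon>. closed_discrete_curve n (P t))
        \<and> (\<forall>k<n. \<forall>t\<in>ball 0 \<epsilon>. ((\<lambda>s. P s k) has_vector_derivative P' k t) (at t))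
        \<and> (\<forall>k<n. \<forall>t\<in>ball 0 \<epsilon>. (P' k has_vector_derivative P'' k t) (at t))
        \<and> (\<forall>k<n. continuous_on (ball 0 \<epsilon>) (P'' k))
        \<and> (\<forall>k<n. P 0 k = Gamma a m n k)
        \<and> (\<forall>t\<in>ball 0 \<epsilon>. curve_vol \<sigma> n (P t) = curve_vol \<sigma> n (P 0))
        \<and> (\<forall>k<n. P' k 0 = \<psi> k *\<^sub>R vertex_normal \<sigma> n (Gamma a m n) k)
        \<longrightarrow> (deriv (\<lambda>t. curve_length n (P t)) has_real_derivative V) (at 0))
    \<and> (m = 1 \<or> m = n - 1 \<longrightarrow> V \<ge> 0)
    \<and> (2 \<le> m \<and> m \<le> n - 2 \<and> (A, B) \<noteq> (0, 0) \<longrightarrow> V < 0)"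
proof -
  interpret regular_star_polygon n m a \<sigma>
    using hm1 hm2 hm3 ha h\<sigma> hn by unfold_locales auto
  have \<psi>_eq: "\<psi> k = A * cos (2 * pi * real k / real n) + B * sin (2 * pi * real k / real n)" for k
    by (simp add: \<psi>_def)
  have "3 \<le> n"
    using hn by simp
  note harmonic = first_harmonic_sums[OF \<psi>_eq this]
  note \<psi>_mod = first_harmonic_mod[OF \<psi>_eq n_pos]
  have l0_pos: "0 < l0"
    using a_pos sin_beta_pos by (simp add: l0_def beta_eq)
  have V_eq: "V = normal_scale\<^sup>2 / side * ((1 + cos \<alpha>) * (\<Sum>k<n. (\<psi> k)\<^sup>2)
      + (cos \<alpha> - 3) * (\<Sum>k<n. \<psi> k * \<psi> (Suc k)))"
    unfolding V_def l0_def harmonic(3) second_variation_value ..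
  show ?thesis
  proof (intro conjI allI impI, goal_cases)
    case 1
    show ?case
      by (rule harmonic(1))
  next
    case (2 \<epsilon> P P' P'')
    then show ?case
      unfolding V_eq by (elim conjE) (rule length_second_derivative_Gamma[where \<psi> = \<psi>, OF \<psi>_mod])
  next
    case 3
    then show ?case
      unfolding V_def using bracket_nonneg_extreme l0_pos by (simp add: sum_nonneg)
  next
    case 4
    then have "(sin (pi / real n))\<^sup>2 - cos (2 * pi / real n) * (tan (real m * pi / real n))\<^sup>2 < 0"
      and "(\<Sum>k<n. (\<psi> k)\<^sup>2) > 0"
      using bracket_neg_middle[OF hn] hn by (simp_all add: harmonic(2) sum_power2_gt_zero_iff)
    then show ?case
      unfolding V_def using l0_pos by (intro mult_neg_pos mult_pos_neg) simp_all
  qed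
qed

end
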